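(* The sub-set-operad $\mathrm{RWS}_\odot$ of $\mathrm{RWS}$ generated by $A_\succ$, $A_\prec$ and $A_\odot$ consists exactly of the recursively labelled red and white trees in which every node has at most one label and which avoid the two patterns: (i) no node with a nonempty label set has a red child; (ii) no white node has two (or more) red children.
   Context: Red and white trees: $\mathrm{RW}(n)$ is the set of finite rooted trees (children unordered) whose nodes $z$ carry possibly empty label sets $L(z)\subseteq[n]$ partitioning $[n]$, each empty node having at least two children; labelled nodes are white, an empty node is red iff all its children are white (so an empty white node has a red child). Composition $T_1\circ_xT_2$ ($T_1\in\mathrm{RW}(m)$, $T_2\in\mathrm{RW}(n)$): relabel $T_1$ by $y\mapsto y+n-1$ for $y>x$ and $T_2$ by $y\mapsto y+x-1$; $z\ni x$ in $T_1$, $r$ = root of $T_2$. (W) $r$ not red: remove $x$ from $L(z)$, add $L(r)$ to $L(z)$, children of $r$ become children of $z$. (R1) $r$ red, $T_1$ the single node $\{x\}$: result $T_2$. (R2) $r$ red and ($z$ has a child or $|L(z)|\ge2$): remove $x$ from $L(z)$, attach $T_2$ as child subtree of $z$. (R3) $r$ red, $z$ non-root leaf with $L(z)=\{x\}$: delete $z$, children of $r$ become children of the parent of $z$. Colours recomputed. A tree is recursively labelled if for each node the union of label sets in its subtree is an interval of integers. $\mathrm{RWS}$ is the sub-set-operad generated by $A_\mu$ (single node $\{1,2\}$), $A_\prec$ (root $\{1\}$ with child $\{2\}$), $A_\succ$ (root $\{2\}$ with child $\{1\}$), $A_\odot$ (empty red root with children $\{1\},\{2\}$). *)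

theory Defs
  imports Main "HOL-Library.Multiset"
begin

datatype rwt = Node (lab: "nat set") (kids: "rwt multiset")

primrec red :: "rwt \<Rightarrow> bool" where
  "red (Node L K) = (L = {} \<and> True \<notin># image_mset red K)"

definition white :: "rwt \<Rightarrow> bool" where
  "white t = (\<not> red t)"

primrec wf_rw :: "rwt \<Rightarrow> bool" where
  "wf_rw (Node L K) = (finite L \<and> (L = {} \<longrightarrow> size K \<ge> 2) \<and> False \<notin># image_mset wf_rw K)"

primrec labs :: "rwt \<Rightarrow> nat multiset" where
  "labs (Node L K) = mset_set L + sum_mset (image_mset labs K)"

primrec alllabs :: "rwt \<Rightarrow> nat set" where
  "alllabs (Node L K) = L \<union> \<Union> (set_mset (image_mset alllabs K))"

text \<open>RW(n): label sets partition [n] = {1..n}.\<close>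
definition RW :: "nat \<Rightarrow> rwt \<Rightarrow> bool" where
  "RW n t = (wf_rw t \<and> labs t = mset_set {1..n})"

primrec subtrees :: "rwt \<Rightarrow> rwt set" where
  "subtrees (Node L K) = insert (Node L K) (\<Union> (set_mset (image_mset subtrees K)))"

definition is_int_interval :: "nat set \<Rightarrow> bool" where
  "is_int_interval S = (\<exists>a b. S = {a..b})"

definition rec_labelled :: "rwt \<Rightarrow> bool" where
  "rec_labelled t = (\<forall>s \<in> subtrees t. is_int_interval (alllabs s))"

primrec relab :: "(nat \<Rightarrow> nat) \<Rightarrow> rwt \<Rightarrow> rwt" where
  "relab f (Node L K) = Node (f ` L) (image_mset (relab f) K)"

text \<open>Case (W): the node z containing x absorbs the root r of T2.\<close>
primrec graftW :: "nat \<Rightarrow> rwt \<Rightarrow> rwt \<Rightarrow> rwt" where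
  "graftW x R (Node L K) =
     (if x \<in> L then Node ((L - {x}) \<union> lab R) (K + kids R)
      else Node L (image_mset (graftW x R) K))"

text \<open>Cases (R2)/(R3) for a red root r of T2 (applied to a tree whose root is
not the single leaf {x}): a non-root leaf {x} is deleted and replaced by the
children of r (R3); otherwise x is removed from L(z) and T2 is attached as a
child of z (R2).\<close>
primrec graftR :: "nat \<Rightarrow> rwt \<Rightarrow> rwt \<Rightarrow> rwt" where
  "graftR x R (Node L K) =
     (if x \<in> L then Node (L - {x}) (K + {#R#})
      else Node L (sum_mset (image_mset
             (\<lambda>c. if c = Node {x} {#} then kids R else {#graftR x R c#}) K)))"

definition comp :: "rwt \<Rightarrow> nat \<Rightarrow> rwt \<Rightarrow> nat \<Rightarrow> rwt" where
  "comp T1 x T2 n =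
     (let T1' = relab (\<lambda>y. if y > x then y + n - 1 else y) T1;
          T2' = relab (\<lambda>y. y + x - 1) T2
      in if \<not> red T2' then graftW x T2' T1'
         else if T1' = Node {x} {#} then T2'
         else graftR x T2' T1')"

definition A_mu :: rwt where "A_mu = Node {1,2} {#}"
definition A_prec :: rwt where "A_prec = Node {1} {#Node {2} {#}#}"
definition A_succ :: rwt where "A_succ = Node {2} {#Node {1} {#}#}"
definition A_odot :: rwt where "A_odot = Node {} {#Node {1} {#}, Node {2} {#}#}"

inductive RWSodot :: "nat \<Rightarrow> rwt \<Rightarrow> bool" where
  unit: "RWSodot 1 (Node {1} {#})"
| gen_succ: "RWSodot 2 A_succ"
| gen_prec: "RWSodot 2 A_prec"
| gen_odot: "RWSodot 2 A_odot"
| compose: "RWSodot m T1 \<Longrightarrow> RWSodot n T2 \<Longrightarrow> 1 \<le> x \<Longrightarrow> x \<le> m \<Longrightarrow>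
            RWSodot (m + n - 1) (comp T1 x T2 n)"

end

theory Submission
  imports Defs
begin

text \<open>The conditions of the theorem amount to three invariants: the node-wise shape
  conditions, all subtree label sets being intervals, and distinct labels. They hold for the
  unit and the generators and are preserved by partial composition, since grafting at \<open>x\<close>
  replaces every label set \<open>S \<ni> x\<close> of the relabelled \<open>T\<^sub>1\<close> by \<open>S \<union> J\<close>, \<open>J\<close> the
  labels of \<open>T\<^sub>2\<close>. Conversely, by induction on the size, a tree with these invariants
  splits off a subtree \<open>c\<close>: a child with children (regrafted by (W) if white, by (R2) if
  red), or, when all children are leaves, a copy of \<open>A_prec\<close>, \<open>A_succ\<close> or \<open>A_odot\<close> made of
  the root or of two leaves (regrafted by (W) or (R3)). The labels of \<open>c\<close> form an interval
  \<open>{p..q}\<close>; closing the gap \<open>{p<..q}\<close> in the rest and shifting \<open>c\<close> down to \<open>{1..q-p+1}\<close>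
  yields two smaller trees with the invariants whose composition at \<open>p\<close> is the original.\<close>

abbreviation leaf :: "nat \<Rightarrow> rwt" where
  "leaf b \<equiv> Node {b} {#}"

lemma red_Node: "red (Node L K) \<longleftrightarrow> L = {} \<and> (\<forall>c\<in>#K. \<not> red c)"
  by auto

lemma red_Node_filter: "red (Node L K) \<longleftrightarrow> L = {} \<and> filter_mset red K = {#}"
  by (auto simp: filter_mset_eq_mempty_iff)

lemma alllabs_child_subset: "c \<in># K \<Longrightarrow> alllabs c \<subseteq> alllabs (Node L K)"
  by auto

lemma size_child: "c \<in># K \<Longrightarrow> size c < size (Node L K)"
proof -
  assume "c \<in># K"
  then obtain K' where "K = add_mset c K'" by (blast dest: multi_member_split)
  then show ?thesis by simp
qed

primrec odot_shape :: "rwt \<Rightarrow> bool" where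
  "odot_shape (Node L K) \<longleftrightarrow> finite L \<and> card L \<le> 1 \<and> (L = {} \<longrightarrow> 2 \<le> size K) \<and>
     (L \<noteq> {} \<longrightarrow> (\<forall>c\<in>#K. \<not> red c)) \<and>
     (\<not> red (Node L K) \<longrightarrow> size (filter_mset red K) \<le> 1) \<and> False \<notin># image_mset odot_shape K"

primrec all_subtree_labels :: "(nat set \<Rightarrow> bool) \<Rightarrow> rwt \<Rightarrow> bool" where
  "all_subtree_labels P (Node L K) \<longleftrightarrow>
     P (alllabs (Node L K)) \<and> False \<notin># image_mset (all_subtree_labels P) K"

lemma odot_shape_Node [simp]:
  "odot_shape (Node L K) \<longleftrightarrow> finite L \<and> card L \<le> 1 \<and> (L = {} \<longrightarrow> 2 \<le> size K) \<and>
     (L \<noteq> {} \<longrightarrow> (\<forall>c\<in>#K. \<not> red c)) \<and>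
     (\<not> red (Node L K) \<longrightarrow> size (filter_mset red K) \<le> 1) \<and> (\<forall>c\<in>#K. odot_shape c)"
  by auto

lemma all_subtree_labels_Node [simp]:
  "all_subtree_labels P (Node L K) \<longleftrightarrow> P (alllabs (Node L K)) \<and> (\<forall>c\<in>#K. all_subtree_labels P c)"
  by auto

declare odot_shape.simps [simp del] all_subtree_labels.simps [simp del]

lemma all_subtree_labels_root: "all_subtree_labels P t \<Longrightarrow> P (alllabs t)"
  by (cases t) (simp del: alllabs.simps)

lemma all_subtree_labels_iff: "all_subtree_labels P t \<longleftrightarrow> (\<forall>s\<in>subtrees t. P (alllabs s))"
  by (induction t) auto

lemma all_subtree_labels_mono:
  "all_subtree_labels P t \<Longrightarrow> (\<And>S. P S \<Longrightarrow> S \<subseteq> alllabs t \<Longrightarrow> Q S) \<Longrightarrow> all_subtree_labels Q t"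
proof (induction t)
  case (Node L K)
  have "all_subtree_labels Q c" if c: "c \<in># K" for c
  proof (rule Node.IH[OF c])
    show "all_subtree_labels P c" using Node.prems(1) c by simp
    fix S assume "P S" "S \<subseteq> alllabs c"
    moreover have "alllabs c \<subseteq> alllabs (Node L K)" using c by auto
    ultimately show "Q S" using Node.prems(2) by blast
  qed
  then show ?case using Node.prems by (simp del: alllabs.simps)
qed

lemma odot_shape_iff:
  "odot_shape t \<longleftrightarrow> wf_rw t \<and> (\<forall>s\<in>subtrees t. card (lab s) \<le> 1 \<and>
     (lab s \<noteq> {} \<longrightarrow> (\<forall>c\<in>#kids s. \<not> red c)) \<and>
     (white s \<longrightarrow> size (filter_mset red (kids s)) \<le> 1))" (is "_ \<longleftrightarrow> ?rhs t")
proof (induction t)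
  case (Node L K)
  show ?case
  proof
    assume "odot_shape (Node L K)"
    then show "?rhs (Node L K)" using Node.IH unfolding white_def by (auto simp del: red.simps)
  next
    assume "?rhs (Node L K)"
    then show "odot_shape (Node L K)" using Node.IH unfolding white_def by (auto simp del: red.simps)
  qed
qed

lemma single_label: "finite L \<Longrightarrow> card L \<le> 1 \<Longrightarrow> x \<in> L \<Longrightarrow> L = {x}"
  using card_le_Suc0_iff_eq by fastforce

lemma leaf_if_no_kids: "odot_shape t \<Longrightarrow> kids t = {#} \<Longrightarrow> \<exists>b. t = leaf b"
  by (cases t) (auto dest: single_label)

lemma set_mset_labs: "odot_shape t \<Longrightarrow> set_mset (labs t) = alllabs t"
  by (induction t) auto

lemma finite_alllabs: "odot_shape t \<Longrightarrow> finite (alllabs t)"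
  by (induction t) auto

lemma alllabs_nonempty: "odot_shape t \<Longrightarrow> alllabs t \<noteq> {}"
proof (induction t)
  case (Node L K)
  then show ?case
    by (cases "L = {}") (auto dest!: multi_member_split)
qed

subsection \<open>Relabelling\<close>

lemma alllabs_relab: "alllabs (relab f t) = f ` alllabs t"
  by (induction t) (auto simp: image_Union)

lemma red_relab: "red (relab f t) = red t"
  by (induction t) auto

lemma size_relab: "size (relab f t) = size t"
proof (induction t)
  case (Node L K)
  have "size_multiset size (image_mset (relab f) K) = size_multiset (size \<circ> relab f) K"
    by (metis comp_apply size_multiset_o_map)
  also have "\<dots> = size_multiset size K"
    using Node by (simp add: size_multiset_eq)
  finally show ?case by simp
qed

lemma odot_shape_relab: "odot_shape t \<Longrightarrow> odot_shape (relab f t)"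
proof (induction t)
  case (Node L K)
  have "card (f ` L) \<le> 1" using Node.prems card_image_le[of L f] by auto
  then show ?case using Node by (auto simp: red_relab filter_mset_image_mset)
qed

lemma relab_relab: "relab f (relab g t) = relab (f \<circ> g) t"
  by (induction t) (auto simp: image_image multiset.map_comp intro!: image_mset_cong)

lemma relab_ident: "(\<And>y. y \<in> alllabs t \<Longrightarrow> f y = y) \<Longrightarrow> relab f t = t"
proof (induction t)
  case (Node L K)
  have "image_mset (relab f) K = image_mset id K"
    by (rule image_mset_cong) (use Node in auto)
  moreover have "f ` L = L" using Node.prems by force
  ultimately show ?case by simp
qed

lemma all_subtree_labels_relab:
  "all_subtree_labels P t \<Longrightarrow> (\<And>S. P S \<Longrightarrow> S \<subseteq> alllabs t \<Longrightarrow> Q (f ` S)) \<Longrightarrow>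
   all_subtree_labels Q (relab f t)"
proof (induction t)
  case (Node L K)
  have "all_subtree_labels Q (relab f c)" if c: "c \<in># K" for c
  proof (rule Node.IH[OF c])
    show "all_subtree_labels P c" using Node.prems(1) c by simp
    fix S assume "P S" "S \<subseteq> alllabs c"
    moreover have "alllabs c \<subseteq> alllabs (Node L K)" using c by auto
    ultimately show "Q (f ` S)" using Node.prems(2) by blast
  qed
  moreover have "Q (alllabs (relab f (Node L K)))"
    unfolding alllabs_relab using Node.prems by auto
  ultimately show ?case by (simp del: alllabs.simps)
qed

lemma image_mset_sum_mset: "image_mset f (sum_mset M) = sum_mset (image_mset (image_mset f) M)"
  by (induction M) auto

lemma labs_relab:
  "odot_shape t \<Longrightarrow> inj_on f (alllabs t) \<Longrightarrow> labs (relab f t) = image_mset f (labs t)"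
proof (induction t)
  case (Node L K)
  have "image_mset (labs \<circ> relab f) K = image_mset (image_mset f \<circ> labs) K"
  proof (rule image_mset_cong)
    fix c assume c: "c \<in># K"
    have "inj_on f (alllabs c)" using c Node.prems(2) by (auto intro: inj_on_subset)
    then show "(labs \<circ> relab f) c = (image_mset f \<circ> labs) c" using Node c by simp
  qed
  moreover have "mset_set (f ` L) = image_mset f (mset_set L)"
    by (rule image_mset_mset_set[symmetric], rule inj_on_subset[OF Node.prems(2)]) auto
  ultimately show ?case
    by (simp add: image_mset_sum_mset multiset.map_comp[symmetric])
qed

definition distinct_labels :: "rwt \<Rightarrow> bool" where
  "distinct_labels t \<longleftrightarrow> labs t = mset_set (alllabs t)"

lemma distinct_labels_relab:
  "odot_shape t \<Longrightarrow> distinct_labels t \<Longrightarrow> inj_on f (alllabs t) \<Longrightarrow> distinct_labels (relab f t)"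
  unfolding distinct_labels_def by (simp add: labs_relab alllabs_relab image_mset_mset_set)

lemma distinct_labels_iff_count:
  assumes "odot_shape t"
  shows "distinct_labels t \<longleftrightarrow> (\<forall>y. count (labs t) y \<le> 1)"
proof
  show "distinct_labels t \<Longrightarrow> \<forall>y. count (labs t) y \<le> 1"
    unfolding distinct_labels_def using finite_alllabs[OF assms] by (simp add: count_mset_set')
next
  assume le: "\<forall>y. count (labs t) y \<le> 1"
  show "distinct_labels t" unfolding distinct_labels_def
  proof (rule multiset_eqI)
    fix y
    have pos: "y \<in> alllabs t \<longleftrightarrow> 0 < count (labs t) y" using set_mset_labs[OF assms] by auto
    show "count (labs t) y = count (mset_set (alllabs t)) y"
    proof (cases "y \<in> alllabs t")
      case True
      with pos have "0 < count (labs t) y" by blast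
      with le[rule_format, of y] have "count (labs t) y = 1" by linarith
      then show ?thesis using True finite_alllabs[OF assms] by simp
    next
      case False
      with pos have "count (labs t) y = 0" by (simp add: not_in_iff)
      then show ?thesis using False by simp
    qed
  qed
qed

lemma disjoint_if_subset_count_le_1:
  assumes "A + B \<subseteq># M" and "\<And>y. count M y \<le> 1"
  shows "set_mset A \<inter> set_mset B = {}"
proof (rule ccontr)
  assume "set_mset A \<inter> set_mset B \<noteq> {}"
  then obtain y where "y \<in># A" "y \<in># B" by auto
  then have "0 < count A y" "0 < count B y" by simp_all
  moreover have "count (A + B) y \<le> count M y" using assms(1) by (rule mset_subset_eq_count)
  ultimately show False using assms(2)[of y] count_union[of A B y] by linarith
qed

lemma labs_Node_child:
  "c \<in># K \<Longrightarrow> labs (Node L K) = mset_set L + labs c + sum_mset (image_mset labs (K - {#c#}))"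
  by (auto dest!: multi_member_split simp: add_ac)

context
  fixes L K
  assumes shape: "odot_shape (Node L K)" and distinct: "distinct_labels (Node L K)"
begin

private lemma count_labs_le_1: "count (labs (Node L K)) y \<le> 1"
  using distinct shape distinct_labels_iff_count by blast

lemma distinct_labels_child:
  assumes "c \<in># K" shows "distinct_labels c"
proof -
  have "count (labs c) y \<le> count (labs (Node L K)) y" for y
    using labs_Node_child[OF assms, of L] by simp
  then have "count (labs c) y \<le> 1" for y
    using count_labs_le_1[of y] by (meson le_trans)
  moreover have "odot_shape c" using shape assms by simp
  ultimately show ?thesis using distinct_labels_iff_count by blast
qed

lemma root_disjoint_child:
  assumes "c \<in># K" shows "L \<inter> alllabs c = {}"
proof -
  have "mset_set L + labs c \<subseteq># labs (Node L K)"
    using labs_Node_child[OF assms, of L] by simp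
  then have "set_mset (mset_set L) \<inter> set_mset (labs c) = {}"
    using disjoint_if_subset_count_le_1 count_labs_le_1 by blast
  then show ?thesis using assms shape set_mset_labs by simp
qed

lemma children_disjoint:
  assumes "c \<in># K" "e \<in># K - {#c#}" shows "alllabs c \<inter> alllabs e = {}"
proof -
  have "labs (Node L K) = mset_set L + (labs c + labs e) + sum_mset (image_mset labs (K - {#c#} - {#e#}))"
    using labs_Node_child[OF assms(1), of L]
    by (subst (asm) insert_DiffM[OF assms(2), symmetric]) (simp add: add_ac)
  then have "labs c + labs e \<subseteq># labs (Node L K)" by simp
  then have "set_mset (labs c) \<inter> set_mset (labs e) = {}"
    using disjoint_if_subset_count_le_1 count_labs_le_1 by blast
  moreover have "e \<in># K" using assms(2) by (rule in_diffD)
  ultimately show ?thesis using assms(1) shape set_mset_labs by simp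
qed

lemma unique_child_containing:
  assumes "x \<notin> L" "x \<in> alllabs (Node L K)"
  obtains c K' where "K = add_mset c K'" "x \<in> alllabs c" "\<And>e. e \<in># K' \<Longrightarrow> x \<notin> alllabs e"
proof -
  obtain c where c: "c \<in># K" "x \<in> alllabs c" using assms by auto
  show ?thesis
    by (rule that[of c "K - {#c#}"]) (use c children_disjoint in auto)
qed

end

subsection \<open>Grafting\<close>

lemma graftW_ident: "x \<notin> alllabs t \<Longrightarrow> graftW x R t = t"
proof (induction t)
  case (Node L K)
  then show ?case by (auto intro: multiset.map_ident_strong)
qed

lemma sum_mset_image_singleton: "\<Sum>\<^sub># (image_mset (\<lambda>c. {#c#}) K) = K"
  by (induction K) auto

lemma graftR_ident: "x \<notin> alllabs t \<Longrightarrow> graftR x R t = t"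
proof (induction t)
  case (Node L K)
  have "image_mset (\<lambda>c. if c = leaf x then kids R else {#graftR x R c#}) K = image_mset (\<lambda>c. {#c#}) K"
    by (rule image_mset_cong) (use Node in auto)
  then show ?case using Node.prems by (simp add: sum_mset_image_singleton)
qed

text \<open>After grafting a tree with labels \<open>J\<close> at \<open>x\<close>, a label set \<open>S\<close> becomes \<open>S \<union> J\<close>
  if \<open>x \<in> S\<close> and stays \<open>S\<close> otherwise.\<close>

definition glued_interval :: "nat \<Rightarrow> nat set \<Rightarrow> nat set \<Rightarrow> bool" where
  "glued_interval x J S \<longleftrightarrow> (if x \<in> S then is_int_interval (S \<union> J) else is_int_interval S)"

lemma intervals_if_glued_not_mem:
  "all_subtree_labels (glued_interval x J) t \<Longrightarrow> x \<notin> alllabs t \<Longrightarrow>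
   all_subtree_labels is_int_interval t"
  by (rule all_subtree_labels_mono[of "glued_interval x J"])
    (auto simp: glued_interval_def split: if_splits)

lemma glued_interval_root:
  "all_subtree_labels (glued_interval x J) t \<Longrightarrow> x \<in> alllabs t \<Longrightarrow>
   is_int_interval (alllabs t \<union> J)"
  by (cases t) (simp add: glued_interval_def del: alllabs.simps)

lemma odot_shape_replace_kids:
  assumes "odot_shape (Node L K)" and "size K \<le> size K'"
    and "size (filter_mset red K') = size (filter_mset red K)" and "\<forall>c\<in>#K'. odot_shape c"
  shows "odot_shape (Node L K')"
proof -
  have "filter_mset red K' = {#} \<longleftrightarrow> filter_mset red K = {#}"
    using assms(3) by (simp only: size_eq_0_iff_empty[symmetric])
  then have "red (Node L K') = red (Node L K)" and "(\<forall>c\<in>#K'. \<not> red c) \<longleftrightarrow> (\<forall>c\<in>#K. \<not> red c)"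
    by (simp_all add: red_Node_filter del: red.simps) blast
  then show ?thesis using assms by (auto simp del: red.simps)
qed

lemma red_graftW: "\<not> red R \<Longrightarrow> red (graftW x R t) = red t"
proof (induction t)
  case (Node L K)
  show ?case
  proof (cases "x \<in> L")
    case True
    obtain LR KR where "R = Node LR KR" by (cases R)
    then show ?thesis using True Node.prems by auto
  next
    case False
    then show ?thesis using Node by (auto simp: red_Node simp del: red.simps)
  qed
qed

lemma odot_shape_graftW:
  "odot_shape t \<Longrightarrow> odot_shape R \<Longrightarrow> \<not> red R \<Longrightarrow> odot_shape (graftW x R t)"
proof (induction t)
  case (Node L K)
  show ?case
  proof (cases "x \<in> L")
    case True
    with Node.prems have L: "L = {x}" and white: "\<forall>c\<in>#K. \<not> red c"
      by (auto dest: single_label)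
    obtain LR KR where R: "R = Node LR KR" by (cases R)
    have "size (filter_mset red K) = 0" using white by simp
    then show ?thesis using Node.prems L R True white by (auto simp del: size_eq_0_iff_empty)
  next
    case False
    have "odot_shape (Node L (image_mset (graftW x R) K))"
    proof (rule odot_shape_replace_kids[OF Node.prems(1)])
      show "size (filter_mset red (image_mset (graftW x R) K)) = size (filter_mset red K)"
        by (simp add: filter_mset_image_mset red_graftW[OF Node.prems(3)])
    qed (use Node in auto)
    then show ?thesis using False by simp
  qed
qed

lemma alllabs_graftW:
  "x \<in> alllabs R \<Longrightarrow> x \<in> alllabs t \<Longrightarrow> alllabs (graftW x R t) = alllabs t \<union> alllabs R"
proof (induction t)
  case (Node L K)
  show ?case
  proof (cases "x \<in> L")
    case True
    obtain LR KR where "R = Node LR KR" by (cases R)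
    then show ?thesis using True Node.prems(1) by auto
  next
    case False
    have "alllabs (graftW x R c) = alllabs c \<union> (if x \<in> alllabs c then alllabs R else {})"
      if "c \<in># K" for c
      using Node.IH[OF that Node.prems(1)] graftW_ident by auto
    then have "(\<Union>c\<in>set_mset K. alllabs (graftW x R c)) =
        (\<Union>c\<in>set_mset K. alllabs c \<union> (if x \<in> alllabs c then alllabs R else {}))"
      by (intro SUP_cong) auto
    also have "\<dots> = (\<Union>c\<in>set_mset K. alllabs c) \<union> alllabs R"
      using False Node.prems(2) by (auto split: if_splits)
    finally show ?thesis using False by auto
  qed
qed

lemma labs_graftW:
  "odot_shape t \<Longrightarrow> distinct_labels t \<Longrightarrow> x \<in> alllabs t \<Longrightarrow>
   labs (graftW x R t) + {#x#} = labs t + labs R"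
proof (induction t)
  case (Node L K)
  show ?case
  proof (cases "x \<in> L")
    case True
    with Node.prems have "L = {x}" by (auto dest: single_label)
    moreover obtain LR KR where "R = Node LR KR" by (cases R)
    ultimately show ?thesis by (simp add: add_ac)
  next
    case False
    obtain c K' where K: "K = add_mset c K'" and c: "x \<in> alllabs c"
      and K': "\<And>e. e \<in># K' \<Longrightarrow> x \<notin> alllabs e"
      using unique_child_containing[OF Node.prems(1,2) False Node.prems(3)] by blast
    have "image_mset (graftW x R) K' = K'"
      using K' graftW_ident by (auto intro: multiset.map_ident_strong)
    moreover have "labs (graftW x R c) + {#x#} = labs c + labs R"
      using Node.IH[of c] Node.prems distinct_labels_child[OF Node.prems(1,2)] c K by simp
    ultimately show ?thesis using False K by (simp add: add_ac)
  qed
qed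

lemma all_subtree_labels_graftW:
  assumes "all_subtree_labels (glued_interval x (alllabs R)) t"
    and "all_subtree_labels is_int_interval R" "x \<in> alllabs R"
    and "odot_shape t" "distinct_labels t"
  shows "all_subtree_labels is_int_interval (graftW x R t)"
  using assms
proof (induction t)
  case (Node L K)
  show ?case
  proof (cases "x \<in> alllabs (Node L K)")
    case False
    then have "graftW x R (Node L K) = Node L K" by (rule graftW_ident)
    then show ?thesis using intervals_if_glued_not_mem[OF Node.prems(1) False] by simp
  next
    case True
    have root: "is_int_interval (alllabs (graftW x R (Node L K)))"
      using glued_interval_root[OF Node.prems(1) True] alllabs_graftW[OF Node.prems(3) True] by simp
    show ?thesis
    proof (cases "x \<in> L")
      case xL: True
      obtain LR KR where R: "R = Node LR KR" by (cases R)
      have "all_subtree_labels is_int_interval c" if c: "c \<in># K" for c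
      proof (rule intervals_if_glued_not_mem)
        show "all_subtree_labels (glued_interval x (alllabs R)) c" using Node.prems(1) c by simp
        show "x \<notin> alllabs c" using root_disjoint_child[OF Node.prems(4,5) c] xL by blast
      qed
      then show ?thesis using root Node.prems(2) xL unfolding R by (auto simp del: alllabs.simps)
    next
      case xL: False
      have "all_subtree_labels is_int_interval (graftW x R c)" if c: "c \<in># K" for c
        using Node.IH[OF c] Node.prems c distinct_labels_child[OF Node.prems(4,5) c] by simp
      then show ?thesis using root xL by (simp del: alllabs.simps)
    qed
  qed
qed

lemma size_le_size_sum_mset:
  "(\<And>c. c \<in># K \<Longrightarrow> h c \<noteq> {#}) \<Longrightarrow> size K \<le> size (\<Sum>\<^sub># (image_mset h K))"
proof (induction K)
  case (add c K)
  then have "0 < size (h c)" using nonempty_has_size by auto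
  then show ?case using add by simp
qed simp

lemma size_red_graftR_kids:
  assumes "red R" and "\<And>c. c \<in># K \<Longrightarrow> red (graftR x R c) = red c"
  shows "size (filter_mset red (\<Sum>\<^sub># (image_mset
           (\<lambda>c. if c = leaf x then kids R else {#graftR x R c#}) K))) = size (filter_mset red K)"
  using assms(2)
proof (induction K)
  case (add c K)
  have "filter_mset red (kids R) = {#}"
    using assms(1) by (cases R) (simp add: filter_mset_eq_mempty_iff)
  then show ?case using add by auto
qed simp

lemma red_graftR: "red R \<Longrightarrow> red (graftR x R t) = red t"
proof (induction t)
  case (Node L K)
  show ?case
  proof (cases "x \<in> L")
    case True
    then show ?thesis using Node.prems by auto
  next
    case False
    have "size (filter_mset red (kids (graftR x R (Node L K)))) = size (filter_mset red K)"
      using False size_red_graftR_kids[OF Node.prems, of K x] Node.IH Node.prems by simp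
    then have "filter_mset red (kids (graftR x R (Node L K))) = {#} \<longleftrightarrow> filter_mset red K = {#}"
      by (simp only: size_eq_0_iff_empty[symmetric])
    then show ?thesis using False by (simp add: red_Node_filter del: red.simps)
  qed
qed

lemma odot_shape_graftR:
  "odot_shape t \<Longrightarrow> odot_shape R \<Longrightarrow> red R \<Longrightarrow> t \<noteq> leaf x \<Longrightarrow> odot_shape (graftR x R t)"
proof (induction t)
  case (Node L K)
  obtain KR where R: "R = Node {} KR" using Node.prems(3) by (cases R) auto
  show ?case
  proof (cases "x \<in> L")
    case True
    with Node.prems have L: "L = {x}" and white: "\<forall>c\<in>#K. \<not> red c" and "K \<noteq> {#}"
      by (auto dest: single_label)
    then have "size (filter_mset red K) = 0" and "2 \<le> size (K + {#R#})"
      by (auto simp: nonempty_has_size Suc_le_eq)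
    then show ?thesis using Node.prems True L by (auto simp del: size_eq_0_iff_empty)
  next
    case False
    define h where "h c = (if c = leaf x then kids R else {#graftR x R c#})" for c
    have "odot_shape (Node L (\<Sum>\<^sub># (image_mset h K)))"
    proof (rule odot_shape_replace_kids[OF Node.prems(1)])
      show "size K \<le> size (\<Sum>\<^sub># (image_mset h K))"
        by (rule size_le_size_sum_mset) (use Node.prems(2) R in \<open>auto simp: h_def\<close>)
      show "size (filter_mset red (\<Sum>\<^sub># (image_mset h K))) = size (filter_mset red K)"
        using size_red_graftR_kids[OF Node.prems(3), of K x] red_graftR[OF Node.prems(3)]
        unfolding h_def by simp
      show "\<forall>d\<in>#\<Sum>\<^sub># (image_mset h K). odot_shape d"
        using Node.IH Node.prems R by (auto simp: h_def in_Union_mset_iff split: if_splits)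
    qed
    then show ?thesis using False unfolding h_def by simp
  qed
qed

lemma alllabs_graftR:
  "red R \<Longrightarrow> x \<in> alllabs R \<Longrightarrow> x \<in> alllabs t \<Longrightarrow> alllabs (graftR x R t) = alllabs t \<union> alllabs R"
proof (induction t)
  case (Node L K)
  obtain KR where R: "R = Node {} KR" using Node.prems(1) by (cases R) auto
  show ?case
  proof (cases "x \<in> L")
    case True
    then show ?thesis using Node.prems(2) by auto
  next
    case False
    define h where "h c = (if c = leaf x then kids R else {#graftR x R c#})" for c
    have "(\<Union>d\<in>set_mset (h c). alllabs d) = alllabs c \<union> (if x \<in> alllabs c then alllabs R else {})"
      if "c \<in># K" for c
      using Node.IH[OF that Node.prems(1,2)] graftR_ident Node.prems(2) R
      by (auto simp: h_def)
    then have "(\<Union>c\<in>set_mset K. \<Union>d\<in>set_mset (h c). alllabs d) =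
        (\<Union>c\<in>set_mset K. alllabs c \<union> (if x \<in> alllabs c then alllabs R else {}))"
      by (intro SUP_cong) auto
    also have "\<dots> = (\<Union>c\<in>set_mset K. alllabs c) \<union> alllabs R"
      using False Node.prems(3) by (auto split: if_splits)
    finally have kids_labels: "(\<Union>c\<in>set_mset K. \<Union>d\<in>set_mset (h c). alllabs d) =
        (\<Union>c\<in>set_mset K. alllabs c) \<union> alllabs R" .
    have "alllabs (graftR x R (Node L K)) = alllabs (Node L (\<Sum>\<^sub># (image_mset h K)))"
      using False unfolding h_def by simp
    also have "\<dots> = L \<union> (\<Union>c\<in>set_mset K. \<Union>d\<in>set_mset (h c). alllabs d)"
      by (auto simp: set_mset_Union_mset)
    finally show ?thesis unfolding kids_labels by auto
  qed
qed

lemma labs_graftR: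
  "odot_shape t \<Longrightarrow> distinct_labels t \<Longrightarrow> x \<in> alllabs t \<Longrightarrow> red R \<Longrightarrow>
   labs (graftR x R t) + {#x#} = labs t + labs R"
proof (induction t)
  case (Node L K)
  obtain KR where R: "R = Node {} KR" using Node.prems(4) by (cases R) auto
  show ?case
  proof (cases "x \<in> L")
    case True
    with Node.prems have "L = {x}" by (auto dest: single_label)
    then show ?thesis by (simp add: add_ac)
  next
    case False
    obtain c K' where K: "K = add_mset c K'" and c: "x \<in> alllabs c"
      and K': "\<And>e. e \<in># K' \<Longrightarrow> x \<notin> alllabs e"
      using unique_child_containing[OF Node.prems(1,2) False Node.prems(3)] by blast
    define h where "h c = (if c = leaf x then kids R else {#graftR x R c#})" for c
    have "h e = {#e#}" if "e \<in># K'" for e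
      using K'[OF that] graftR_ident[OF K'[OF that]] by (auto simp: h_def)
    then have "image_mset h K' = image_mset (\<lambda>c. {#c#}) K'" by (rule image_mset_cong)
    then have graft: "graftR x R (Node L K) = Node L (h c + K')"
      using False K unfolding h_def by (simp add: sum_mset_image_singleton)
    have "\<Sum>\<^sub># (image_mset labs (h c)) + {#x#} = labs c + labs R"
    proof (cases "c = leaf x")
      case False
      then show ?thesis
        using Node.IH[of c] Node.prems distinct_labels_child[OF Node.prems(1,2)] c K
        by (simp add: h_def)
    qed (simp add: h_def R add_ac)
    then show ?thesis unfolding graft using K by (simp add: add_ac)
  qed
qed

lemma all_subtree_labels_graftR:
  assumes "all_subtree_labels (glued_interval x (alllabs R)) t"
    and "all_subtree_labels is_int_interval R" "x \<in> alllabs R" "red R"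
    and "odot_shape t" "distinct_labels t"
  shows "all_subtree_labels is_int_interval (graftR x R t)"
  using assms
proof (induction t)
  case (Node L K)
  show ?case
  proof (cases "x \<in> alllabs (Node L K)")
    case False
    then have "graftR x R (Node L K) = Node L K" by (rule graftR_ident)
    then show ?thesis using intervals_if_glued_not_mem[OF Node.prems(1) False] by simp
  next
    case True
    have root: "is_int_interval (alllabs (graftR x R (Node L K)))"
      using glued_interval_root[OF Node.prems(1) True] alllabs_graftR[OF Node.prems(4,3) True]
      by simp
    obtain KR where R: "R = Node {} KR" using Node.prems(4) by (cases R) auto
    show ?thesis
    proof (cases "x \<in> L")
      case xL: True
      have "all_subtree_labels is_int_interval c" if c: "c \<in># K" for c
      proof (rule intervals_if_glued_not_mem)
        show "all_subtree_labels (glued_interval x (alllabs R)) c" using Node.prems(1) c by simp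
        show "x \<notin> alllabs c" using root_disjoint_child[OF Node.prems(5,6) c] xL by blast
      qed
      then show ?thesis using root Node.prems(2) xL by (simp del: alllabs.simps)
    next
      case xL: False
      have "all_subtree_labels is_int_interval (graftR x R c)" if c: "c \<in># K" for c
        using Node.IH[OF c] Node.prems c distinct_labels_child[OF Node.prems(5,6) c] by simp
      then show ?thesis using root xL Node.prems(2) unfolding R
        by (auto simp: in_Union_mset_iff simp del: alllabs.simps split: if_splits)
    qed
  qed
qed

lemma is_int_interval_atLeastAtMost: "is_int_interval {a..b}"
  unfolding is_int_interval_def by blast

lemma is_int_interval_empty: "is_int_interval {}"
  using is_int_interval_atLeastAtMost[of 1 0] by simp

lemma is_int_interval_image_add: "is_int_interval S \<Longrightarrow> is_int_interval ((\<lambda>y. y + k) ` S)"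
  unfolding is_int_interval_def by (metis image_add_atLeastAtMost')

lemma image_minus_atLeastAtMost_nat:
  assumes "k \<le> a" "a \<le> b"
  shows "(\<lambda>y::nat. y - k) ` {a..b} = {a - k..b - k}"
proof
  show "{a - k..b - k} \<subseteq> (\<lambda>y. y - k) ` {a..b}"
  proof
    fix z assume "z \<in> {a - k..b - k}"
    then have "z + k \<in> {a..b}" "z = z + k - k" using assms by auto
    then show "z \<in> (\<lambda>y. y - k) ` {a..b}" by blast
  qed
qed auto

lemma is_int_interval_image_diff:
  assumes "is_int_interval S" "\<And>y. y \<in> S \<Longrightarrow> k \<le> y"
  shows "is_int_interval ((\<lambda>y. y - k) ` S)"
proof -
  obtain a b where S: "S = {a..b}" using assms(1) unfolding is_int_interval_def by blast
  show ?thesis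
  proof (cases "a \<le> b")
    case True
    then have "(\<lambda>y. y - k) ` S = {a - k..b - k}"
      unfolding S using assms(2) S by (intro image_minus_atLeastAtMost_nat) auto
    then show ?thesis unfolding is_int_interval_def by blast
  qed (simp add: S is_int_interval_empty)
qed

lemma insert_gap_mem_iff:
  fixes x y n :: nat
  assumes "1 \<le> n"
  shows "(if x < y then y + n - 1 else y) \<in> {x..x+n-1} \<longleftrightarrow> y = x"
proof -
  obtain m where "n = Suc m" using assms by (cases n) auto
  then show ?thesis by auto
qed

lemma insert_gap_image_Int:
  fixes x n :: nat
  assumes "1 \<le> n"
  shows "(\<lambda>y. if x < y then y + n - 1 else y) ` S \<inter> {x..x+n-1} = (if x \<in> S then {x} else {})"
proof (rule set_eqI, rule iffI)
  fix z assume "z \<in> (\<lambda>y. if x < y then y + n - 1 else y) ` S \<inter> {x..x+n-1}"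
  then obtain y where y: "y \<in> S" "z = (if x < y then y + n - 1 else y)"
    and "(if x < y then y + n - 1 else y) \<in> {x..x+n-1}" by auto
  with insert_gap_mem_iff[OF assms] have "y = x" by blast
  with y show "z \<in> (if x \<in> S then {x} else {})" by (cases "x < y") auto
next
  fix z assume "z \<in> (if x \<in> S then {x} else {})"
  then have z: "z = x" "x \<in> S" by (auto split: if_splits)
  have "x \<in> (\<lambda>y. if x < y then y + n - 1 else y) ` S" using z(2) by (rule rev_image_eqI) simp
  moreover have "x \<le> x + n - 1" using assms by arith
  ultimately show "z \<in> (\<lambda>y. if x < y then y + n - 1 else y) ` S \<inter> {x..x+n-1}" using z by simp
qed

lemma insert_gap_image_Un:
  fixes a b x n :: nat
  assumes "a \<le> x" "x \<le> b" "1 \<le> n"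
  shows "(\<lambda>y. if x < y then y + n - 1 else y) ` {a..b} \<union> {x..x+n-1} = {a..b+n-1}"
proof -
  obtain m where n: "n = Suc m" using assms(3) by (cases n) auto
  have "{a..b+m} \<subseteq> (\<lambda>y. if x < y then y + m else y) ` {a..b} \<union> {x..x+m}"
  proof
    fix z assume z: "z \<in> {a..b+m}"
    consider "z \<le> x" | "x < z" "z \<le> x + m" | "x + m < z" using not_le by blast
    then show "z \<in> (\<lambda>y. if x < y then y + m else y) ` {a..b} \<union> {x..x+m}"
    proof cases
      case 1
      then have "z \<in> (\<lambda>y. if x < y then y + m else y) ` {a..b}"
        using z assms(2) by (intro rev_image_eqI[of z]) auto
      then show ?thesis by blast
    next
      case 3
      then have "z \<in> (\<lambda>y. if x < y then y + m else y) ` {a..b}"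
        using z assms(1) by (intro rev_image_eqI[of "z - m"]) auto
      then show ?thesis by blast
    qed simp
  qed
  moreover have "(\<lambda>y. if x < y then y + m else y) ` {a..b} \<union> {x..x+m} \<subseteq> {a..b+m}"
    using assms(1,2) by auto
  ultimately show ?thesis unfolding n by auto
qed

lemma glued_interval_insert_gap:
  assumes "is_int_interval S" "1 \<le> n"
  shows "glued_interval x {x..x+n-1} ((\<lambda>y. if x < y then y + n - 1 else y) ` S)"
proof -
  define f where "f y = (if x < y then y + n - 1 else y)" for y
  obtain a b where S: "S = {a..b}" using assms(1) unfolding is_int_interval_def by blast
  have x_in: "x \<in> f ` S \<longleftrightarrow> x \<in> S"
  proof
    assume "x \<in> f ` S"
    then obtain y where "y \<in> S" "f y = x" by auto
    moreover have "x \<in> {x..x+n-1}" using assms(2) by simp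
    ultimately show "x \<in> S" using insert_gap_mem_iff[OF assms(2), of x y] unfolding f_def by auto
  next
    assume "x \<in> S"
    then show "x \<in> f ` S" by (rule rev_image_eqI) (simp add: f_def)
  qed
  consider "x \<in> S" | "b < x" | "x < a" using S by force
  then have "glued_interval x {x..x+n-1} (f ` S)"
  proof cases
    case 1
    then have "f ` S \<union> {x..x+n-1} = {a..b+n-1}"
      using insert_gap_image_Un[of a x b n] assms(2) unfolding S f_def by simp
    then have "is_int_interval (f ` S \<union> {x..x+n-1})" unfolding is_int_interval_def by blast
    then show ?thesis using x_in 1 unfolding glued_interval_def by simp
  next
    case 2
    then have "f ` S = (\<lambda>y. y) ` S" unfolding S f_def by (intro image_cong) auto
    then show ?thesis using 2 assms(1) S by (simp add: glued_interval_def)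
  next
    case 3
    then have "f ` S = (\<lambda>y. y + (n - 1)) ` S" unfolding S f_def using assms(2)
      by (intro image_cong) auto
    moreover have "x \<notin> S" using 3 S by simp
    ultimately show ?thesis using x_in is_int_interval_image_add[OF assms(1)]
      unfolding glued_interval_def by simp
  qed
  then show ?thesis unfolding f_def .
qed

lemma close_gap_image_interval:
  fixes a b p k :: nat
  assumes "a \<le> p" "p + k \<le> b"
  shows "(\<lambda>y. if p + k < y then y - k else y) ` ({a..b} - {p<..p+k}) = {a..b-k}"
    (is "?g ` ?S = _")
proof
  show "?g ` ?S \<subseteq> {a..b-k}"
  proof
    fix z assume "z \<in> ?g ` ?S"
    then obtain y where y: "a \<le> y" "y \<le> b" "y \<le> p \<or> p + k < y" and z: "z = ?g y"
      by auto
    show "z \<in> {a..b-k}"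
    proof (cases "p + k < y")
      case True
      then have "z = y - k" using z by simp
      moreover have "a \<le> y - k" "y - k \<le> b - k" using True y(2) assms(1) by arith+
      ultimately show ?thesis by simp
    next
      case False
      then have "z = y" "y \<le> p" using z y(3) by simp_all
      moreover have "p \<le> b - k" using assms(2) by arith
      ultimately show ?thesis using y(1) by simp
    qed
  qed
  show "{a..b-k} \<subseteq> ?g ` ?S"
  proof
    fix z assume z: "z \<in> {a..b-k}"
    show "z \<in> ?g ` ?S"
    proof (cases "z \<le> p")
      case True
      have "z \<le> b - k" using z by simp
      then have "z \<le> b" by arith
      with True z have "z \<in> ?S" by simp
      moreover have "z = ?g z" using True by simp
      ultimately show ?thesis by (rule rev_image_eqI)
    next
      case False
      have "z \<le> b - k" using z by simp
      then have "z + k \<le> b" using assms(2) by arith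
      with False z have "z + k \<in> ?S" by simp
      moreover have "z = ?g (z + k)" using False by simp
      ultimately show ?thesis by (rule rev_image_eqI)
    qed
  qed
qed

lemma is_int_interval_close_gap:
  assumes glued: "glued_interval p {p..q} S" and gap: "S \<inter> {p<..q} = {}" and "p \<le> q"
  shows "is_int_interval ((\<lambda>y. if q < y then y - (q - p) else y) ` S)"
proof -
  obtain k where q: "q = p + k" using \<open>p \<le> q\<close> le_iff_add by blast
  show ?thesis
  proof (cases "p \<in> S")
    case True
    then have "is_int_interval (S \<union> {p..q})" using glued unfolding glued_interval_def by simp
    then obtain a b where ab: "S \<union> {p..q} = {a..b}" unfolding is_int_interval_def by blast
    have "p \<in> {a..b}" "q \<in> {a..b}" unfolding ab[symmetric] using \<open>p \<le> q\<close> by auto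
    then have "a \<le> p" "p + k \<le> b" unfolding q by auto
    have "y \<in> S \<longleftrightarrow> y \<in> {a..b} - {p<..q}" for y
    proof -
      have "y \<in> S \<or> y \<in> {p..q} \<longleftrightarrow> y \<in> {a..b}" using ab by blast
      moreover have "y \<in> S \<Longrightarrow> y \<notin> {p<..q}" using gap by blast
      ultimately show ?thesis using True by (cases "y = p") auto
    qed
    then have "S = {a..b} - {p<..p+k}" unfolding q by (intro set_eqI) simp
    then have "(\<lambda>y. if q < y then y - (q - p) else y) ` S = {a..b-k}"
      using close_gap_image_interval[OF \<open>a \<le> p\<close> \<open>p + k \<le> b\<close>] unfolding q by simp
    then show ?thesis unfolding is_int_interval_def by blast
  next
    case False
    then have S_int: "is_int_interval S" using glued unfolding glued_interval_def by simp
    then obtain a b where S: "S = {a..b}" unfolding is_int_interval_def by blast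
    have "S \<inter> {p..q} = {}"
    proof (rule equals0I)
      fix y assume y: "y \<in> S \<inter> {p..q}"
      with False have "y \<in> {p<..q}" by (cases "y = p") auto
      with y gap show False by blast
    qed
    have "b < p \<or> q < a \<or> b < a"
    proof (rule ccontr)
      assume "\<not> (b < p \<or> q < a \<or> b < a)"
      then have "max a p \<in> S \<inter> {p..q}" unfolding S using \<open>p \<le> q\<close> by auto
      with \<open>S \<inter> {p..q} = {}\<close> show False by blast
    qed
    then have "(\<forall>y\<in>S. y \<le> q) \<or> (\<forall>y\<in>S. q < y)" unfolding S using \<open>p \<le> q\<close> by auto
    then show ?thesis
    proof (elim disjE)
      assume "\<forall>y\<in>S. y \<le> q"
      then have "(\<lambda>y. if q < y then y - (q - p) else y) ` S = (\<lambda>y. y) ` S"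
        by (intro image_cong) auto
      then show ?thesis using S_int by simp
    next
      assume above: "\<forall>y\<in>S. q < y"
      then have "(\<lambda>y. if q < y then y - (q - p) else y) ` S = (\<lambda>y. y - (q - p)) ` S"
        by (intro image_cong) auto
      moreover have "is_int_interval ((\<lambda>y. y - (q - p)) ` S)"
        using above by (intro is_int_interval_image_diff[OF S_int]) auto
      ultimately show ?thesis by simp
    qed
  qed
qed

subsection \<open>Trees of the operad\<close>

definition odot_tree :: "nat set \<Rightarrow> rwt \<Rightarrow> bool" where
  "odot_tree S t \<longleftrightarrow>
     odot_shape t \<and> all_subtree_labels is_int_interval t \<and> distinct_labels t \<and> alllabs t = S"

lemma odot_tree_relab:
  assumes "odot_tree S t" and "inj_on f S"
    and "\<And>A. is_int_interval A \<Longrightarrow> A \<subseteq> S \<Longrightarrow> is_int_interval (f ` A)"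
  shows "odot_tree (f ` S) (relab f t)"
  using assms odot_shape_relab[of t f] all_subtree_labels_relab[of is_int_interval t]
    distinct_labels_relab[of t f]
  unfolding odot_tree_def by (simp add: alllabs_relab)

lemma odot_tree_shift_up:
  assumes "odot_tree {1..n} t" "1 \<le> x"
  shows "odot_tree {x..x+n-1} (relab (\<lambda>y. y + x - 1) t)"
proof -
  have shift: "(\<lambda>y::nat. y + x - 1) = (\<lambda>y. y + (x - 1))" using assms(2) by auto
  have "(\<lambda>y. y + (x - 1)) ` {1..n} = {1 + (x - 1)..n + (x - 1)}" by (rule image_add_atLeastAtMost')
  also have "\<dots> = {x..x+n-1}"
  proof -
    have "1 + (x - 1) = x" "n + (x - 1) = x + n - 1" using assms(2) by auto
    then show ?thesis by (simp only:)
  qed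
  finally have image: "(\<lambda>y. y + (x - 1)) ` {1..n} = {x..x+n-1}" .
  have "odot_tree ((\<lambda>y. y + (x - 1)) ` {1..n}) (relab (\<lambda>y. y + (x - 1)) t)"
    by (rule odot_tree_relab[OF assms(1)]) (auto simp: is_int_interval_image_add)
  then show ?thesis unfolding shift image .
qed

lemma odot_tree_shift_down:
  assumes "odot_tree {p..q} t" "1 \<le> p"
  shows "odot_tree {1..q-p+1} (relab (\<lambda>y. y + 1 - p) t)"
proof -
  have "p \<le> q" using assms(1) alllabs_nonempty unfolding odot_tree_def by fastforce
  have shift: "(\<lambda>y::nat. y + 1 - p) = (\<lambda>y. y - (p - 1))" using assms(2) by auto
  have "odot_tree ((\<lambda>y. y - (p - 1)) ` {p..q}) (relab (\<lambda>y. y - (p - 1)) t)"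
  proof (rule odot_tree_relab[OF assms(1)])
    show "inj_on (\<lambda>y. y - (p - 1)) {p..q}" using assms(2) by (auto simp: inj_on_def)
    fix A assume A: "is_int_interval A" "A \<subseteq> {p..q}"
    show "is_int_interval ((\<lambda>y. y - (p - 1)) ` A)"
      by (rule is_int_interval_image_diff[OF A(1)]) (use A(2) in fastforce)
  qed
  moreover have "(\<lambda>y. y - (p - 1)) ` {p..q} = {p - (p - 1)..q - (p - 1)}"
    using \<open>p \<le> q\<close> by (intro image_minus_atLeastAtMost_nat) auto
  moreover have "p - (p - 1) = 1" "q - (p - 1) = q - p + 1" using \<open>p \<le> q\<close> assms(2) by auto
  ultimately show ?thesis unfolding shift by (simp only:)
qed

lemma mset_set_Un_add_Int_singleton:
  assumes "finite A" "finite B" "A \<inter> B = {x}"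
  shows "mset_set (A \<union> B) + {#x#} = mset_set A + mset_set B"
proof -
  have "mset_set B = add_mset x (mset_set (B - {x}))"
    using assms(2,3) by (intro mset_set.remove) auto
  moreover have "A \<union> B = A \<union> (B - {x})" "A \<inter> (B - {x}) = {}" using assms(3) by auto
  then have "mset_set (A \<union> B) = mset_set A + mset_set (B - {x})"
    using mset_set_Union[of A "B - {x}"] assms(1,2) by simp
  ultimately show ?thesis by simp
qed

lemma odot_tree_if_labs_merge:
  assumes "odot_shape r" "all_subtree_labels is_int_interval r" "alllabs r = A \<union> B"
    and "labs r + {#x#} = mset_set A + mset_set B" "A \<inter> B = {x}" "finite A" "finite B"
  shows "odot_tree (A \<union> B) r"
proof -
  have "labs r + {#x#} = mset_set (A \<union> B) + {#x#}"
    using assms(4) mset_set_Un_add_Int_singleton[OF assms(6,7,5)] by simp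
  then show ?thesis using assms(1-3) unfolding odot_tree_def distinct_labels_def by simp
qed

lemma odot_tree_graft:
  assumes t: "odot_shape t" "all_subtree_labels (glued_interval x J) t" "distinct_labels t"
    and x: "x \<in> alllabs t" and R: "odot_tree J R" and inter: "alllabs t \<inter> J = {x}"
  shows "odot_tree (alllabs t \<union> J)
           (if \<not> red R then graftW x R t else if t = leaf x then R else graftR x R t)"
proof -
  have R': "odot_shape R" "all_subtree_labels is_int_interval R" "distinct_labels R" "alllabs R = J"
    using R unfolding odot_tree_def by auto
  have xJ: "x \<in> J" using inter by auto
  have merge: "labs r + {#x#} = labs t + labs R \<Longrightarrow> labs r + {#x#} = mset_set (alllabs t) + mset_set J"
    for r using t(3) R'(3,4) unfolding distinct_labels_def by simp
  have fin: "finite (alllabs t)" "finite J" using finite_alllabs t(1) R'(1,4) by auto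
  show ?thesis
  proof (cases "red R")
    case False
    show ?thesis
    proof (simp only: False if_True not_False_eq_True, rule odot_tree_if_labs_merge[OF _ _ _ _ inter fin])
      show "odot_shape (graftW x R t)" using odot_shape_graftW[OF t(1) R'(1) False] .
      show "all_subtree_labels is_int_interval (graftW x R t)"
        using all_subtree_labels_graftW[of x R t] t R' xJ by simp
      show "alllabs (graftW x R t) = alllabs t \<union> J" using alllabs_graftW[of x R t] x R' xJ by simp
      show "labs (graftW x R t) + {#x#} = mset_set (alllabs t) + mset_set J"
        using merge labs_graftW[OF t(1,3) x] by blast
    qed
  next
    case True
    show ?thesis
    proof (cases "t = leaf x")
      case True
      then show ?thesis using \<open>red R\<close> R xJ by (simp add: insert_absorb)
    next
      case False
      show ?thesis
      proof (simp only: \<open>red R\<close> False if_False not_True_eq_False,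
          rule odot_tree_if_labs_merge[OF _ _ _ _ inter fin])
        show "odot_shape (graftR x R t)" using odot_shape_graftR[OF t(1) R'(1) \<open>red R\<close> False] .
        show "all_subtree_labels is_int_interval (graftR x R t)"
          using all_subtree_labels_graftR[of x R t] t R' xJ \<open>red R\<close> by simp
        show "alllabs (graftR x R t) = alllabs t \<union> J"
          using alllabs_graftR[of R x t] x R' xJ \<open>red R\<close> by simp
        show "labs (graftR x R t) + {#x#} = mset_set (alllabs t) + mset_set J"
          using merge labs_graftR[OF t(1,3) x \<open>red R\<close>] by blast
      qed
    qed
  qed
qed

lemma odot_tree_comp:
  assumes T1: "odot_tree {1..m} T1" and T2: "odot_tree {1..n} T2" and x: "1 \<le> x" "x \<le> m"
  shows "odot_tree {1..m+n-1} (comp T1 x T2 n)"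
proof -
  have "1 \<le> n" using T2 alllabs_nonempty unfolding odot_tree_def by fastforce
  define f where "f y = (if x < y then y + n - 1 else y)" for y
  define J where "J = {x..x+n-1}"
  have T1: "odot_shape T1" "all_subtree_labels is_int_interval T1" "distinct_labels T1"
    "alllabs T1 = {1..m}"
    using assms(1) unfolding odot_tree_def by auto
  have "inj_on f {1..m}" using \<open>1 \<le> n\<close> unfolding inj_on_def f_def by auto
  then have T1': "odot_shape (relab f T1)" "distinct_labels (relab f T1)"
    "all_subtree_labels (glued_interval x J) (relab f T1)"
    using odot_shape_relab[OF T1(1)] distinct_labels_relab[OF T1(1,3)] T1(4)
      all_subtree_labels_relab[OF T1(2), of "glued_interval x J" f]
      glued_interval_insert_gap[OF _ \<open>1 \<le> n\<close>, of _ x]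
    unfolding f_def J_def by auto
  have labels1: "alllabs (relab f T1) = f ` {1..m}"
    using T1 unfolding odot_tree_def by (simp add: alllabs_relab)
  have inter: "alllabs (relab f T1) \<inter> J = {x}"
    using insert_gap_image_Int[OF \<open>1 \<le> n\<close>, of x "{1..m}"] x unfolding labels1 f_def J_def by simp
  have union: "alllabs (relab f T1) \<union> J = {1..m+n-1}"
    using insert_gap_image_Un[of 1 x m n] x \<open>1 \<le> n\<close> unfolding labels1 f_def J_def by simp
  have T2': "odot_tree J (relab (\<lambda>y. y + x - 1) T2)"
    unfolding J_def using T2 x(1) by (rule odot_tree_shift_up)
  have "x \<in> alllabs (relab f T1)" using inter by blast
  from odot_tree_graft[OF T1'(1,3,2) this T2' inter]
  show ?thesis unfolding comp_def Let_def union f_def .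
qed

lemma is_int_interval_singleton: "is_int_interval {a}"
  unfolding is_int_interval_def by (intro exI[of _ a]) simp

lemma odot_tree_generators:
  "odot_tree {1..1} (leaf 1)" "odot_tree {1..2} A_succ" "odot_tree {1..2} A_prec"
  "odot_tree {1..2} A_odot"
proof -
  have set12: "{1..2::nat} = {1, 2}" by auto
  then have "is_int_interval {1, 2::nat}"
    unfolding is_int_interval_def by (rule_tac exI[of _ 1], rule_tac exI[of _ 2]) simp
  show "odot_tree {1..1} (leaf 1)"
    by (simp add: odot_tree_def distinct_labels_def is_int_interval_singleton)
  show "odot_tree {1..2} A_succ" "odot_tree {1..2} A_prec" "odot_tree {1..2} A_odot"
    unfolding odot_tree_def distinct_labels_def A_succ_def A_prec_def A_odot_def set12
    using \<open>is_int_interval {1, 2}\<close>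
    by (simp_all add: insert_commute is_int_interval_singleton)
qed

theorem odot_tree_if_RWSodot: "RWSodot n T \<Longrightarrow> odot_tree {1..n} T"
proof (induction rule: RWSodot.induct)
  case (compose m T1 n T2 x)
  from compose.IH compose.hyps(3,4) show ?case by (rule odot_tree_comp)
qed (rule odot_tree_generators)+

subsection \<open>Decomposition\<close>

lemma glued_interval_if_not_mem:
  "all_subtree_labels is_int_interval t \<Longrightarrow> x \<notin> alllabs t \<Longrightarrow>
   all_subtree_labels (glued_interval x J) t"
  by (rule all_subtree_labels_mono[of is_int_interval]) (auto simp: glued_interval_def)

lemma glued_interval_singleton: "p \<le> q \<Longrightarrow> glued_interval p {p..q} {b}"
  by (cases "b = p") (simp_all add: glued_interval_def is_int_interval_singleton
      is_int_interval_atLeastAtMost insert_absorb)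

lemma glued_interval_gap_root:
  assumes "1 \<le> p" "p \<le> q" "q \<le> n"
  shows "glued_interval p {p..q} ({1..n} - {p<..q})"
proof -
  have "p \<in> {1..n} - {p<..q}" "({1..n} - {p<..q}) \<union> {p..q} = {1..n}" using assms by auto
  then show ?thesis by (simp add: glued_interval_def is_int_interval_atLeastAtMost)
qed

lemma odot_tree_close_gap:
  assumes t0: "odot_shape t0" "all_subtree_labels (glued_interval p {p..q}) t0"
    and labs: "labs t0 = mset_set ({1..n} - {p<..q})" and pq: "1 \<le> p" "p \<le> q" "q \<le> n"
  shows "odot_tree {1..n - (q - p)} (relab (\<lambda>y. if q < y then y - (q - p) else y) t0)"
proof -
  define g where "g y = (if q < y then y - (q - p) else y)" for y
  have labels: "alllabs t0 = {1..n} - {p<..q}" using set_mset_labs[OF t0(1)] labs by simp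
  have "inj_on g (alllabs t0)"
  proof (rule inj_onI)
    fix y z assume "y \<in> alllabs t0" "z \<in> alllabs t0" "g y = g z"
    then show "y = z" unfolding g_def labels by (auto split: if_splits)
  qed
  moreover have "distinct_labels t0" using labels labs unfolding distinct_labels_def by simp
  moreover have "g ` ({1..n} - {p<..q}) = {1..n - (q - p)}"
    using close_gap_image_interval[of 1 p "q - p" n] pq unfolding g_def by simp
  moreover have "all_subtree_labels is_int_interval (relab g t0)"
  proof (rule all_subtree_labels_relab[OF t0(2)])
    fix S assume "glued_interval p {p..q} S" "S \<subseteq> alllabs t0"
    moreover have "S \<inter> {p<..q} = {}" using \<open>S \<subseteq> alllabs t0\<close> labels by auto
    ultimately show "is_int_interval (g ` S)"
      unfolding g_def using is_int_interval_close_gap pq(2) by blast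
  qed
  ultimately show ?thesis
    using odot_shape_relab[OF t0(1)] distinct_labels_relab[OF t0(1)] labels
    unfolding odot_tree_def g_def by (simp add: alllabs_relab)
qed

lemma relab_close_gap_inverse:
  assumes "alllabs t \<inter> {p<..q} = {}" "p \<le> q"
  shows "relab (\<lambda>y. if p < y then y + (q - p + 1) - 1 else y)
           (relab (\<lambda>y. if q < y then y - (q - p) else y) t) = t"
  unfolding relab_relab by (rule relab_ident) (use assms in auto)

lemma relab_shift_inverse:
  assumes "alllabs c = {p..q}" "1 \<le> p"
  shows "relab (\<lambda>y. y + p - 1) (relab (\<lambda>y. y + 1 - p) c) = c"
  unfolding relab_relab by (rule relab_ident) (use assms in auto)

text \<open>The relabellings in \<open>comp\<close> undo closing the gap and shifting \<open>c\<close> down.\<close>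

lemma comp_close_gap:
  assumes "alllabs c = {p..q}" "alllabs t0 \<inter> {p<..q} = {}" "1 \<le> p" "p \<le> q"
  shows "comp (relab (\<lambda>y. if q < y then y - (q - p) else y) t0) p
           (relab (\<lambda>y. y + 1 - p) c) (q - p + 1) =
         (if \<not> red c then graftW p c t0 else if t0 = leaf p then c else graftR p c t0)"
  unfolding comp_def Let_def relab_close_gap_inverse[OF assms(2,4)]
    relab_shift_inverse[OF assms(1,3)] ..

lemma RWSodot_graft:
  assumes "RWSodot (n - (q - p)) (relab (\<lambda>y. if q < y then y - (q - p) else y) t0)"
    and "RWSodot (q - p + 1) (relab (\<lambda>y. y + 1 - p) c)"
    and "alllabs c = {p..q}" "alllabs t0 \<inter> {p<..q} = {}" "1 \<le> p" "p \<le> q" "q \<le> n"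
  shows "RWSodot n (if \<not> red c then graftW p c t0 else if t0 = leaf p then c else graftR p c t0)"
proof -
  have bound: "p \<le> n - (q - p)" and arity: "n - (q - p) + (q - p + 1) - 1 = n"
    using assms(5-7) by arith+
  from RWSodot.compose[OF assms(1,2) assms(5) bound] show ?thesis
    unfolding arity comp_close_gap[OF assms(3-6)] .
qed

lemma size_pos: "0 < size (t :: rwt)"
  by (cases t) simp

lemma odot_shape_leaves:
  assumes "\<forall>d\<in>#K. \<exists>b. d = leaf b" "finite L" "card L \<le> 1" "L = {} \<longrightarrow> 2 \<le> size K"
  shows "odot_shape (Node L K)"
proof -
  have "\<forall>c\<in>#K. \<not> red c \<and> odot_shape c" using assms(1) by auto
  moreover from this have "size (filter_mset red K) = 0" by simp
  ultimately show ?thesis using assms(2-4) by (simp del: size_eq_0_iff_empty)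
qed

context
  fixes n :: nat and L :: "nat set" and K :: "rwt multiset"
  assumes tree: "odot_tree {1..n} (Node L K)"
    and IH: "\<And>m t. size t < size (Node L K) \<Longrightarrow> odot_tree {1..m} t \<Longrightarrow> RWSodot m t"
begin

private lemma shape: "odot_shape (Node L K)"
  and intervals: "all_subtree_labels is_int_interval (Node L K)"
  and distinct: "distinct_labels (Node L K)"
  and labels: "alllabs (Node L K) = {1..n}"
  and labs_tree: "labs (Node L K) = mset_set {1..n}"
  using tree unfolding odot_tree_def distinct_labels_def by auto

lemma child_odot_tree: "c \<in># K \<Longrightarrow> odot_tree (alllabs c) c"
  using shape intervals distinct_labels_child[OF shape distinct] unfolding odot_tree_def by simp

lemma child_labels:
  assumes "c \<in># K"
  obtains p q where "alllabs c = {p..q}" "1 \<le> p" "p \<le> q" "q \<le> n"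
proof -
  have "is_int_interval (alllabs c)" using intervals assms by (simp add: all_subtree_labels_root)
  then obtain p q where pq: "alllabs c = {p..q}" unfolding is_int_interval_def by blast
  moreover have "alllabs c \<noteq> {}" using shape assms alllabs_nonempty by simp
  moreover have "alllabs c \<subseteq> {1..n}" using labels assms by auto
  ultimately show ?thesis using that by auto
qed

lemma RWSodot_child:
  assumes "c \<in># K" "alllabs c = {p..q}" "1 \<le> p"
  shows "RWSodot (q - p + 1) (relab (\<lambda>y. y + 1 - p) c)"
proof (rule IH)
  show "size (relab (\<lambda>y. y + 1 - p) c) < size (Node L K)"
    using size_child[OF assms(1)] by (simp add: size_relab)
  show "odot_tree {1..q - p + 1} (relab (\<lambda>y. y + 1 - p) c)"
    using child_odot_tree[OF assms(1)] assms(2,3) by (intro odot_tree_shift_down) simp_all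
qed

text \<open>The label equation says that \<open>Node L0 K0\<close> is labelled by \<open>{1..n} - {p<..q}\<close>.\<close>

lemma RWSodot_regraft:
  assumes t0: "odot_shape (Node L0 K0)" "\<forall>d\<in>#K0. all_subtree_labels (glued_interval p {p..q}) d"
    and labs_eq: "labs (Node L0 K0) + mset_set {p..q} = labs (Node L K) + {#p#}"
    and smaller: "size (Node L0 K0) < size (Node L K)"
    and c: "alllabs c = {p..q}" "RWSodot (q - p + 1) (relab (\<lambda>y. y + 1 - p) c)"
    and pq: "1 \<le> p" "p \<le> q" "q \<le> n"
    and eq: "Node L K = (if \<not> red c then graftW p c (Node L0 K0)
               else if Node L0 K0 = leaf p then c else graftR p c (Node L0 K0))"
  shows "RWSodot n (Node L K)"
proof -
  define t0 where "t0 = Node L0 K0"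
  define G where "G = {1..n} - {p<..q}"
  have "G \<union> {p..q} = {1..n}" "G \<inter> {p..q} = {p}" using pq unfolding G_def by auto
  then have "labs t0 + mset_set {p..q} = mset_set G + mset_set {p..q}"
    using labs_eq labs_tree mset_set_Un_add_Int_singleton[of G "{p..q}" p]
    unfolding t0_def G_def by simp
  then have labs0: "labs t0 = mset_set G" by simp
  then have labels0: "alllabs t0 = G"
    using set_mset_labs[of t0] t0(1) unfolding t0_def G_def by simp
  have "all_subtree_labels (glued_interval p {p..q}) t0"
    using t0(2) glued_interval_gap_root[OF pq] labels0 unfolding t0_def G_def by simp
  then have "odot_tree {1..n - (q - p)} (relab (\<lambda>y. if q < y then y - (q - p) else y) t0)"
    using odot_tree_close_gap t0(1) labs0 pq unfolding t0_def G_def by blast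
  moreover have "size (relab (\<lambda>y. if q < y then y - (q - p) else y) t0) < size (Node L K)"
    using smaller by (simp only: size_relab t0_def)
  ultimately have "RWSodot (n - (q - p)) (relab (\<lambda>y. if q < y then y - (q - p) else y) t0)"
    by (intro IH)
  moreover have "alllabs t0 \<inter> {p<..q} = {}" using labels0 unfolding G_def by auto
  ultimately show ?thesis
    using RWSodot_graft[OF _ c(2) c(1) _ pq] eq unfolding t0_def by simp
qed

lemma RWSodot_white_child:
  assumes c: "c \<in># K" "\<not> red c" "kids c \<noteq> {#}"
  shows "RWSodot n (Node L K)"
proof -
  obtain p q where pq: "alllabs c = {p..q}" "1 \<le> p" "p \<le> q" "q \<le> n"
    using child_labels[OF c(1)] .
  define K' where "K' = K - {#c#}"
  have K: "K = add_mset c K'" using c(1) unfolding K'_def by simp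
  have p_K': "p \<notin> alllabs d" if "d \<in># K'" for d
    using children_disjoint[OF shape distinct c(1), of d] that pq(1,3) unfolding K'_def by auto
  have p_L: "p \<notin> L" using root_disjoint_child[OF shape distinct c(1)] pq(1,3) by auto
  show ?thesis
  proof (rule RWSodot_regraft[of L "add_mset (leaf p) K'" p q c])
    show "odot_shape (Node L (add_mset (leaf p) K'))"
    proof (rule odot_shape_replace_kids[OF shape])
      show "size K \<le> size (add_mset (leaf p) K')" unfolding K by simp
      show "size (filter_mset red (add_mset (leaf p) K')) = size (filter_mset red K)"
        unfolding K using c(2) by simp
      show "\<forall>d\<in>#add_mset (leaf p) K'. odot_shape d" using shape unfolding K by simp
    qed
    have "all_subtree_labels (glued_interval p {p..q}) d" if "d \<in># K'" for d
      using intervals that p_K'[OF that] unfolding K by (simp add: glued_interval_if_not_mem)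
    then show "\<forall>d\<in>#add_mset (leaf p) K'. all_subtree_labels (glued_interval p {p..q}) d"
      using glued_interval_singleton[OF pq(3)] by simp
    have "labs c = mset_set {p..q}"
      using distinct_labels_child[OF shape distinct c(1)] pq(1) unfolding distinct_labels_def by simp
    then show "labs (Node L (add_mset (leaf p) K')) + mset_set {p..q} = labs (Node L K) + {#p#}"
      unfolding K by (simp add: add_ac)
    obtain d where "d \<in># kids c" using c(3) by blast
    then have "size (leaf p) < size c"
      using size_child[of d "kids c" "lab c"] size_pos[of d] by simp
    then show "size (Node L (add_mset (leaf p) K')) < size (Node L K)" unfolding K by simp
    have "image_mset (graftW p c) K' = K'"
      using p_K' graftW_ident by (auto intro: multiset.map_ident_strong)
    then show "Node L K = (if \<not> red c then graftW p c (Node L (add_mset (leaf p) K'))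
        else if Node L (add_mset (leaf p) K') = leaf p then c
        else graftR p c (Node L (add_mset (leaf p) K')))"
      using c(2) p_L unfolding K by simp
  qed (use pq RWSodot_child[OF c(1) pq(1,2)] in simp_all)
qed

lemma RWSodot_red_child:
  assumes c: "c \<in># K" "red c"
  shows "RWSodot n (Node L K)"
proof -
  obtain p q where pq: "alllabs c = {p..q}" "1 \<le> p" "p \<le> q" "q \<le> n"
    using child_labels[OF c(1)] .
  define K' where "K' = K - {#c#}"
  have K: "K = add_mset c K'" using c(1) unfolding K'_def by simp
  have L: "L = {}" using shape c by auto
  have "size (filter_mset red K) \<le> 1" using shape c by auto
  then have white: "\<forall>d\<in>#K'. \<not> red d" using c(2) unfolding K by (auto simp: filter_mset_eq_mempty_iff)
  have p_K': "p \<notin> alllabs d" if "d \<in># K'" for d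
    using children_disjoint[OF shape distinct c(1), of d] that pq(1,3) unfolding K'_def by auto
  have "K' \<noteq> {#}" using shape L unfolding K by auto
  show ?thesis
  proof (rule RWSodot_regraft[of "{p}" K' p q c])
    have "size (filter_mset red K') = 0" using white by simp
    moreover have "\<forall>d\<in>#K'. odot_shape d" using shape K by simp
    ultimately show "odot_shape (Node {p} K')" using white by (simp del: size_eq_0_iff_empty)
    have "all_subtree_labels (glued_interval p {p..q}) d" if "d \<in># K'" for d
      using intervals that p_K'[OF that] unfolding K by (simp add: glued_interval_if_not_mem)
    then show "\<forall>d\<in>#K'. all_subtree_labels (glued_interval p {p..q}) d" by blast
    have "labs c = mset_set {p..q}"
      using distinct_labels_child[OF shape distinct c(1)] pq(1) unfolding distinct_labels_def by simp
    then show "labs (Node {p} K') + mset_set {p..q} = labs (Node L K) + {#p#}"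
      unfolding K L by (simp add: add_ac)
    show "size (Node {p} K') < size (Node L K)" unfolding K using size_pos[of c] by simp
    show "Node L K = (if \<not> red c then graftW p c (Node {p} K')
        else if Node {p} K' = leaf p then c else graftR p c (Node {p} K'))"
      using c(2) \<open>K' \<noteq> {#}\<close> unfolding K L by (simp add: add.commute)
  qed (use pq RWSodot_child[OF c(1) pq(1,2)] in simp_all)
qed

lemma leaf_mem_if_leaves:
  assumes "\<forall>d\<in>#K. \<exists>b. d = leaf b" "y \<in> {1..n}" "y \<notin> L"
  shows "leaf y \<in># K"
proof -
  obtain d where "d \<in># K" "y \<in> alllabs d" using assms(2,3) labels by auto
  moreover obtain b where "d = leaf b" using assms(1) \<open>d \<in># K\<close> by blast
  ultimately show ?thesis by simp
qed

lemma RWSodot_labelled_root_step: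
  assumes leaves: "\<forall>d\<in>#K. \<exists>b. d = leaf b" and L: "L = {a}" and b: "leaf b \<in># K"
    and ab: "{a, b} = {p, p + 1}" "a \<noteq> b" "1 \<le> p"
    and c: "RWSodot 2 (relab (\<lambda>y. y + 1 - p) (Node {a} {#leaf b#}))"
  shows "RWSodot n (Node L K)"
proof -
  define K' where "K' = K - {#leaf b#}"
  have K: "K = add_mset (leaf b) K'" using b unfolding K'_def by simp
  have "b \<in> alllabs (Node L K)" using alllabs_child_subset[OF b] by auto
  moreover have "a \<in> alllabs (Node L K)" using L by simp
  ultimately have "{a, b} \<subseteq> {1..n}" unfolding labels by simp
  moreover have "p + 1 \<in> {a, b}" unfolding ab(1) by simp
  ultimately have "p + 1 \<in> {1..n}" by blast
  have pq: "{p..p+1} = {a, b}" unfolding ab(1) by auto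
  show ?thesis
  proof (rule RWSodot_regraft[of "{p}" K' p "p + 1" "Node {a} {#leaf b#}"])
    show "odot_shape (Node {p} K')" using leaves K by (intro odot_shape_leaves) auto
    show "\<forall>d\<in>#K'. all_subtree_labels (glued_interval p {p..p + 1}) d"
      using leaves K glued_interval_singleton[of p "p + 1"] by auto
    show "labs (Node {p} K') + mset_set {p..p + 1} = labs (Node L K) + {#p#}"
      unfolding K L pq using ab(2) by (simp add: add_ac)
    show "size (Node {p} K') < size (Node L K)" unfolding K by simp
    show "Node L K = (if \<not> red (Node {a} {#leaf b#}) then graftW p (Node {a} {#leaf b#}) (Node {p} K')
        else if Node {p} K' = leaf p then Node {a} {#leaf b#} else graftR p (Node {a} {#leaf b#}) (Node {p} K'))"
      unfolding K L by (simp add: add.commute)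
    show "alllabs (Node {a} {#leaf b#}) = {p..p + 1}" using pq by auto
    have "p + 1 - p + 1 = (2::nat)" by simp
    then show "RWSodot (p + 1 - p + 1) (relab (\<lambda>y. y + 1 - p) (Node {a} {#leaf b#}))"
      using c by (simp only:)
  qed (use \<open>p + 1 \<in> {1..n}\<close> ab(3) in simp_all)
qed

lemma RWSodot_labelled_root_leaves:
  assumes leaves: "\<forall>d\<in>#K. \<exists>b. d = leaf b" and "L \<noteq> {}"
  shows "RWSodot n (Node L K)"
proof -
  obtain a where L: "L = {a}" using shape \<open>L \<noteq> {}\<close> by (auto dest: single_label)
  have a: "a \<in> {1..n}" using labels L by auto
  show ?thesis
  proof (cases "K = {#}")
    case True
    then have "{a} = {1..n}" using labels L by simp
    then have "a = 1" "n = 1" using atLeastAtMost_singleton_iff[of 1 n a] by auto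
    then show ?thesis using L True RWSodot.unit by simp
  next
    case False
    then obtain d where "d \<in># K" by blast
    moreover obtain b where "d = leaf b" using leaves \<open>d \<in># K\<close> by blast
    ultimately have b: "leaf b \<in># K" by simp
    then have "b \<in> alllabs (Node L K)" using alllabs_child_subset[OF b] by auto
    then have "b \<in> {1..n}" unfolding labels .
    have "b \<noteq> a" using root_disjoint_child[OF shape distinct b] L by auto
    show ?thesis
    proof (cases "a < n")
      case True
      have "leaf (a + 1) \<in># K" using leaf_mem_if_leaves[OF leaves, of "a + 1"] True L by simp
      moreover have "relab (\<lambda>y. y + 1 - a) (Node {a} {#leaf (a + 1)#}) = A_prec"
        unfolding A_prec_def using a by simp
      ultimately show ?thesis
        using RWSodot.gen_prec a by (intro RWSodot_labelled_root_step[OF leaves L, of "a + 1" a]) simp_all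
    next
      case False
      then have "2 \<le> a" "a = n" using a \<open>b \<in> {1..n}\<close> \<open>b \<noteq> a\<close> by auto
      have "leaf (a - 1) \<in># K" using leaf_mem_if_leaves[OF leaves, of "a - 1"] \<open>2 \<le> a\<close> \<open>a = n\<close> L
        by simp
      moreover have "relab (\<lambda>y. y + 1 - (a - 1)) (Node {a} {#leaf (a - 1)#}) = A_succ"
        unfolding A_succ_def using \<open>2 \<le> a\<close> by simp
      moreover have "{a, a - 1} = {a - 1, a - 1 + 1}" using \<open>2 \<le> a\<close> by auto
      ultimately show ?thesis
        using RWSodot.gen_succ \<open>2 \<le> a\<close>
        by (intro RWSodot_labelled_root_step[OF leaves L, of "a - 1" "a - 1"]) simp_all
    qed
  qed
qed

lemma RWSodot_empty_root_leaves:
  assumes leaves: "\<forall>d\<in>#K. \<exists>b. d = leaf b" and L: "L = {}"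
  shows "RWSodot n (Node L K)"
proof -
  have "size (labs d) = 1" if "d \<in># K" for d using leaves that by auto
  then have "size (\<Sum>\<^sub># (image_mset labs K)) = size K"
    by (induction K) auto
  then have "size K = size (\<Sum>\<^sub># (image_mset labs K))" by (rule sym)
  also have "\<dots> = n" using labs_tree L by simp
  finally have size_K: "size K = n" .
  then obtain x where n: "n = Suc x" and "1 \<le> x" using shape L by (cases n) auto
  have leaf_in: "leaf y \<in># K" if "y \<in> {1..n}" for y using leaf_mem_if_leaves[OF leaves that] L by simp
  define K'' where "K'' = K - {#leaf n#} - {#leaf x#}"
  have K: "K = add_mset (leaf n) (add_mset (leaf x) K'')"
  proof -
    have "leaf x \<in># K - {#leaf n#}" using leaf_in[of x] \<open>1 \<le> x\<close> n by (simp add: in_diff_count)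
    then have "K - {#leaf n#} = add_mset (leaf x) K''"
      unfolding K''_def by (rule insert_DiffM[symmetric])
    moreover have "K = add_mset (leaf n) (K - {#leaf n#})" using leaf_in[of n] n by simp
    ultimately show ?thesis by simp
  qed
  show ?thesis
  proof (cases "x = 1")
    case True
    then have "K'' = {#}" using size_K K n by simp
    then have "Node L K = A_odot" unfolding A_odot_def K L n True by (simp add: add_mset_commute)
    moreover have "n = 2" using True n by simp
    ultimately show ?thesis using RWSodot.gen_odot by (simp only:)
  next
    case False
    define c where "c = Node {} {#leaf x, leaf n#}"
    have "relab (\<lambda>y. y + 1 - x) c = A_odot" unfolding c_def A_odot_def n by simp
    moreover have "n - x + 1 = 2" using n by simp
    ultimately have c_RWS: "RWSodot (n - x + 1) (relab (\<lambda>y. y + 1 - x) c)"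
      using RWSodot.gen_odot by (simp only:)
    have c_labels: "alllabs c = {x..n}" "{x..n} = {x, n}" unfolding c_def n by auto
    show ?thesis
    proof (rule RWSodot_regraft[of "{}" "add_mset (leaf x) K''" x n c])
      show "odot_shape (Node {} (add_mset (leaf x) K''))"
        using leaves K size_K False \<open>1 \<le> x\<close> n by (intro odot_shape_leaves) auto
      show "\<forall>d\<in>#add_mset (leaf x) K''. all_subtree_labels (glued_interval x {x..n}) d"
        using leaves K glued_interval_singleton[of x n] n by auto
      show "labs (Node {} (add_mset (leaf x) K'')) + mset_set {x..n} = labs (Node L K) + {#x#}"
        unfolding K L c_labels(2) using n by (simp add: add_ac)
      show "size (Node {} (add_mset (leaf x) K'')) < size (Node L K)" unfolding K by simp
      define h where "h d = (if d = leaf x then kids c else {#graftR x c d#})" for d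
      have "h d = {#d#}" if "d \<in># K''" for d
      proof -
        have "leaf x \<in># K" "d \<in># K - {#leaf x#}" using that unfolding K by auto
        from children_disjoint[OF shape distinct this] have "x \<notin> alllabs d" by auto
        then show ?thesis using graftR_ident[of x d c] unfolding h_def by auto
      qed
      then have "image_mset h K'' = image_mset (\<lambda>d. {#d#}) K''" by (rule image_mset_cong)
      then have "\<Sum>\<^sub># (image_mset h K'') = K''" by (simp only: sum_mset_image_singleton)
      moreover have "graftR x c (Node {} (add_mset (leaf x) K'')) =
          Node {} (h (leaf x) + \<Sum>\<^sub># (image_mset h K''))"
        unfolding h_def by simp
      moreover have "h (leaf x) + K'' = K" unfolding h_def K c_def by (simp add: add_mset_commute)
      moreover have "red c" unfolding c_def by simp
      ultimately show "Node L K = (if \<not> red c then graftW x c (Node {} (add_mset (leaf x) K''))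
          else if Node {} (add_mset (leaf x) K'') = leaf x then c
          else graftR x c (Node {} (add_mset (leaf x) K'')))"
        using L by simp
      show "alllabs c = {x..n}" by (fact c_labels(1))
    qed (use c_RWS \<open>1 \<le> x\<close> n in simp_all)
  qed
qed

end

theorem RWSodot_if_odot_tree: "odot_tree {1..n} T \<Longrightarrow> RWSodot n T"
proof (induction T arbitrary: n rule: measure_induct_rule[of size])
  case (less T)
  obtain L K where T: "T = Node L K" by (cases T)
  have tree: "odot_tree {1..n} (Node L K)" using less.prems T by simp
  have IH: "\<And>m t. size t < size (Node L K) \<Longrightarrow> odot_tree {1..m} t \<Longrightarrow> RWSodot m t"
    using less.IH T by blast
  consider (red) c where "c \<in># K" "red c" | (white) c where "c \<in># K" "\<not> red c" "kids c \<noteq> {#}"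
    | (leaves) "\<forall>d\<in>#K. kids d = {#}" by blast
  then show ?case
  proof cases
    case red
    then show ?thesis using RWSodot_red_child[OF tree IH] T by simp
  next
    case white
    then show ?thesis using RWSodot_white_child[OF tree IH] T by simp
  next
    case leaves
    have "odot_shape (Node L K)" using tree unfolding odot_tree_def by simp
    then have "\<forall>d\<in>#K. \<exists>b. d = leaf b" using leaves leaf_if_no_kids by simp
    then show ?thesis
      using RWSodot_labelled_root_leaves[OF tree IH] RWSodot_empty_root_leaves[OF tree IH] T
      by (cases "L = {}") simp_all
  qed
qed

lemma odot_tree_iff_conditions:
  "odot_tree {1..n} T \<longleftrightarrow>
     RW n T \<and> rec_labelled T \<and>
     (\<forall>s \<in> subtrees T. card (lab s) \<le> 1) \<and>
     (\<forall>s \<in> subtrees T. lab s \<noteq> {} \<longrightarrow> (\<forall>c \<in># kids s. \<not> red c)) \<and>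
     (\<forall>s \<in> subtrees T. white s \<longrightarrow> size (filter_mset red (kids s)) \<le> 1)"
    (is "_ \<longleftrightarrow> ?conditions")
proof
  assume ?conditions
  then have shape: "odot_shape T" and "labs T = mset_set {1..n}"
    and "all_subtree_labels is_int_interval T"
    unfolding odot_shape_iff RW_def rec_labelled_def all_subtree_labels_iff by blast+
  moreover have "alllabs T = {1..n}" using set_mset_labs[OF shape] \<open>labs T = _\<close> by simp
  ultimately show "odot_tree {1..n} T" unfolding odot_tree_def distinct_labels_def by simp
qed (simp add: odot_tree_def distinct_labels_def RW_def rec_labelled_def odot_shape_iff
      all_subtree_labels_iff)

theorem mainTheorem12:
  "RWSodot n T \<longleftrightarrow>
     (RW n T \<and> rec_labelled T \<and>
      (\<forall>s \<in> subtrees T. card (lab s) \<le> 1) \<and>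
      (\<forall>s \<in> subtrees T. lab s \<noteq> {} \<longrightarrow> (\<forall>c \<in># kids s. \<not> red c)) \<and>
      (\<forall>s \<in> subtrees T. white s \<longrightarrow> size (filter_mset red (kids s)) \<le> 1))"
  unfolding odot_tree_iff_conditions[symmetric]
  using odot_tree_if_RWSodot RWSodot_if_odot_tree by blast

end
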